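(* Let $m\ge1$, $n=2m$, $1\le k\le n$. Let $g\in\mathbb{F}_{q^n}$ be a normal element over $\mathbb{F}_q$, $\bm{g}=(g^{q^{n-1}},\dots,g^{q},g)$, and $G=\mathcal{P}_k(\bm{g})$. Let $M\in GL_n(\mathbb{F}_{q^n})$ be a circulant matrix. Let $\varphi:\mathbb{F}_{q^n}\to\mathbb{F}_{q^n}$ be an $\mathbb{F}_{q^m}$-linear automorphism that is fully linear over $\mathbb{F}_{q^n}$ (with respect to the base field $\mathbb{F}_{q^m}$). Then $\varphi(M)$ is invertible and there exists $j\in\{0,1\}$ such that $\varphi(GM)\varphi(M)^{-1}=G^{(q^{mj})}$, where $G^{(q^{mj})}$ denotes the matrix obtained by raising every entry of $G$ to the power $q^{mj}$.
   Context: $q$ is a prime power (the paper takes $q$ a power of $2$). $g\in\mathbb{F}_{q^n}$ is normal over $\mathbb{F}_q$ if $g,g^q,\dots,g^{q^{n-1}}$ form an $\mathbb{F}_q$-basis of $\mathbb{F}_{q^n}$. For $\bm{v}=(v_0,\dots,v_{n-1})$, the circulant matrix $\mathcal{P}_n(\bm{v})$ is the $n\times n$ matrix whose first row is $\bm{v}$ and whose $(i+1)$-th row is the cyclic right shift of the $i$-th row, i.e. rows $(v_0,\dots,v_{n-1}),(v_{n-1},v_0,\dots,v_{n-2}),\dots,(v_1,\dots,v_{n-1},v_0)$; $\mathcal{P}_k(\bm{v})$ is the matrix of its first $k$ rows. $\varphi$ is applied entrywise to matrices. An $\mathbb{F}_{q^m}$-linear automorphism $\varphi$ of $\mathbb{F}_{q^n}$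 (a bijective $\mathbb{F}_{q^m}$-linear map) is fully linear over $\mathbb{F}_{q^n}$ if for every length $N$ and every $\mathbb{F}_{q^n}$-linear code $\mathcal{C}\subseteq\mathbb{F}_{q^n}^N$, the set $\varphi(\mathcal{C})=\{\varphi(\bm{c}):\bm{c}\in\mathcal{C}\}$ (componentwise application) is again $\mathbb{F}_{q^n}$-linear. *)

theory Defs
  imports "HOL-Computational_Algebra.Primes" "Jordan_Normal_Form.Matrix"
begin

text \<open>The subfield F_{q^e} of a finite field: elements fixed by x \<mapsto> x^(q^e).\<close>
definition subfield_elems :: "nat \<Rightarrow> 'a::field set" where
  "subfield_elems Q = {x. x ^ Q = x}"

definition prime_power :: "nat \<Rightarrow> bool" where
  "prime_power q \<longleftrightarrow> (\<exists>p r. prime p \<and> r \<ge> 1 \<and> q = p ^ r)"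

definition normal_element :: "nat \<Rightarrow> nat \<Rightarrow> 'a::field \<Rightarrow> bool" where
  "normal_element q n g \<longleftrightarrow>
     (\<forall>c. (\<forall>i<n. c i \<in> subfield_elems q) \<and> (\<Sum>i<n. c i * g ^ (q ^ i)) = 0
          \<longrightarrow> (\<forall>i<n. c i = 0)) \<and>
     (\<forall>x. \<exists>c. (\<forall>i<n. c i \<in> subfield_elems q) \<and> x = (\<Sum>i<n. c i * g ^ (q ^ i)))"

text \<open>P_k(v): first k rows of the n x n circulant matrix with first row v = (v 0, ..., v (n-1));
  row i is the i-fold cyclic right shift, so entry (i,j) is v ((j - i) mod n).\<close>
definition circ_rows :: "nat \<Rightarrow> nat \<Rightarrow> (nat \<Rightarrow> 'a) \<Rightarrow> 'a mat" where
  "circ_rows k n v = mat k n (\<lambda>(i, j). v (nat ((int j - int i) mod int n)))"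

definition is_circulant :: "nat \<Rightarrow> 'a mat \<Rightarrow> bool" where
  "is_circulant n M \<longleftrightarrow> (\<exists>v. M = circ_rows n n v)"

definition linear_code :: "nat \<Rightarrow> 'a::field list set \<Rightarrow> bool" where
  "linear_code N C \<longleftrightarrow> C \<subseteq> {v. length v = N} \<and> replicate N 0 \<in> C \<and>
     (\<forall>u\<in>C. \<forall>v\<in>C. map2 (+) u v \<in> C) \<and> (\<forall>a. \<forall>u\<in>C. map ((*) a) u \<in> C)"

definition fully_linear :: "('a::field \<Rightarrow> 'a) \<Rightarrow> bool" where
  "fully_linear \<phi> \<longleftrightarrow> (\<forall>N C. linear_code N C \<longrightarrow> linear_code N (map \<phi> ` C))"

definition subfield_linear_aut :: "nat \<Rightarrow> ('a::field \<Rightarrow> 'a) \<Rightarrow> bool" where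
  "subfield_linear_aut Q \<phi> \<longleftrightarrow> bij \<phi> \<and> (\<forall>x y. \<phi> (x + y) = \<phi> x + \<phi> y) \<and>
     (\<forall>c x. c \<in> subfield_elems Q \<longrightarrow> \<phi> (c * x) = c * \<phi> x)"

end

theory Submission
  imports Defs "HOL-Number_Theory.Residues" "Jordan_Normal_Form.VS_Connect"
begin

text \<open>
  Full linearity, applied to the one-dimensional code spanned by \<open>(1, x)\<close>, shows that
  \<open>\<phi>(1) \<phi>(a x) = \<phi>(a) \<phi>(x)\<close>. Hence \<open>\<psi> = \<phi> / \<phi>(1)\<close> is a field automorphism of
  \<open>F_{q^{2m}}\<close> fixing \<open>F_{q^m}\<close>, so \<open>\<psi>\<close> is the identity or \<open>x \<mapsto> x^{q^m}\<close>. Since \<open>\<phi>\<close> acts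
  on matrices as \<open>\<phi>(1)\<close> times the ring homomorphism \<open>\<psi>\<close>, the matrix \<open>\<phi>(1)\<^sup>-\<^sup>1 \<psi>(M\<^sup>-\<^sup>1)\<close>
  inverts \<open>\<phi>(M)\<close> and \<open>\<phi>(G M) \<phi>(M)\<^sup>-\<^sup>1 = \<psi>(G)\<close>.
\<close>

lemma power_card_UNIV_eq_self:
  fixes x :: "'a::{field,finite}"
  shows "x ^ card (UNIV :: 'a set) = x"
proof (cases "x = 0")
  case True
  then show ?thesis using finite_UNIV_card_ge_0[where ?'a = 'a] by simp
next
  case False
  have "x ^ card (Units (class_ring :: 'a ring)) = 1"
    using False by (intro class_cring.units_power_order_eq_one) (auto simp: class_field.field_Units)
  moreover have "card (Units (class_ring :: 'a ring)) = card (UNIV :: 'a set) - 1"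
    by (simp add: class_field.field_Units card_Diff_singleton)
  moreover have "card (UNIV :: 'a set) = Suc (card (UNIV :: 'a set) - 1)"
    using finite_UNIV_card_ge_0[where ?'a = 'a] by simp
  ultimately show ?thesis
    by (metis mult.right_neutral power_Suc)
qed

lemma frobenius_power_semiring_hom:
  assumes "prime_power q" and "card (UNIV :: 'a::{field,finite} set) = q ^ n"
  shows "semiring_hom (\<lambda>x::'a. x ^ q ^ e)"
proof -
  obtain p r where p: "prime p" and q: "q = p ^ r"
    using assms(1) unfolding prime_power_def by blast
  have char_prime: "prime CHAR('a)"
    using prime_CHAR_semidom finite_imp_CHAR_pos[OF finite_UNIV] by blast
  have "CHAR('a) dvd p ^ (r * n)"
    using CHAR_dvd_CARD[where ?'a = 'a] assms(2) q by (simp add: power_mult)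
  then have "CHAR('a) = p"
    using char_prime p by (metis prime_dvd_power primes_dvd_imp_eq)
  then have "q ^ e = CHAR('a) ^ (r * e)"
    using q by (simp add: power_mult)
  then show ?thesis
    using prime_gt_0_nat[OF char_prime]
    by unfold_locales (simp_all add: freshmans_dream'[OF char_prime] power_mult_distrib)
qed

lemma power_power_half_card_eq_self:
  fixes x :: "'a::{field,finite}"
  assumes "card (UNIV :: 'a set) = q ^ (2 * m)"
  shows "(x ^ q ^ m) ^ q ^ m = x"
  using power_card_UNIV_eq_self[of x] assms by (simp flip: power_mult add: power_add mult_2)

lemma hom_fixing_fixed_points_pointwise:
  fixes \<sigma> \<psi> :: "'a::field \<Rightarrow> 'a"
  assumes \<sigma>: "semiring_hom \<sigma>" and involution: "\<And>x. \<sigma> (\<sigma> x) = x"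
    and \<psi>: "semiring_hom \<psi>" and fix_\<sigma>: "\<And>c. \<sigma> c = c \<Longrightarrow> \<psi> c = c"
  shows "\<psi> x = x \<or> \<psi> x = \<sigma> x"
proof -
  interpret \<sigma>: semiring_hom \<sigma> by (fact \<sigma>)
  interpret \<psi>: semiring_hom \<psi> by (fact \<psi>)
  txt \<open>\<open>x + \<sigma> x\<close> and \<open>x \<sigma> x\<close> are fixed by \<open>\<sigma>\<close>, so \<open>\<psi> x\<close> is a root of \<open>(Y - x) (Y - \<sigma> x)\<close>.\<close>
  have sum: "\<psi> x + \<psi> (\<sigma> x) = x + \<sigma> x"
    using fix_\<sigma>[of "x + \<sigma> x"] involution by (simp add: \<sigma>.hom_add \<psi>.hom_add add.commute)
  have prod: "\<psi> x * \<psi> (\<sigma> x) = x * \<sigma> x"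
    using fix_\<sigma>[of "x * \<sigma> x"] involution by (simp add: \<sigma>.hom_mult \<psi>.hom_mult mult.commute)
  have "(\<psi> x - x) * (\<psi> x - \<sigma> x) = \<psi> x * \<psi> x - (x + \<sigma> x) * \<psi> x + x * \<sigma> x"
    by (simp add: algebra_simps)
  also have "\<dots> = 0"
    unfolding sum[symmetric] prod[symmetric] by (simp add: algebra_simps)
  finally show ?thesis by simp
qed

lemma hom_fixing_fixed_points_cases:
  fixes \<sigma> \<psi> :: "'a::field \<Rightarrow> 'a"
  assumes \<sigma>: "semiring_hom \<sigma>" and involution: "\<And>x. \<sigma> (\<sigma> x) = x"
    and \<psi>: "semiring_hom \<psi>" and fix_\<sigma>: "\<And>c. \<sigma> c = c \<Longrightarrow> \<psi> c = c"
  shows "\<psi> = id \<or> \<psi> = \<sigma>"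
proof (rule ccontr)
  interpret \<sigma>: semiring_hom \<sigma> by (fact \<sigma>)
  interpret \<psi>: semiring_hom \<psi> by (fact \<psi>)
  note pointwise = hom_fixing_fixed_points_pointwise[OF assms]
  assume "\<not> ?thesis"
  then obtain a b where a: "\<psi> a \<noteq> a" and b: "\<psi> b \<noteq> \<sigma> b" by (auto simp: fun_eq_iff)
  with pointwise have "\<psi> a = \<sigma> a" "\<psi> b = b" by metis+
  then have "\<psi> (a + b) = \<sigma> a + b"
    by (simp add: \<psi>.hom_add)
  moreover have "\<sigma> (a + b) = \<sigma> a + \<sigma> b"
    by (fact \<sigma>.hom_add)
  ultimately show False
    using pointwise[of "a + b"] a b \<open>\<psi> a = \<sigma> a\<close> \<open>\<psi> b = b\<close> by auto
qed

lemma fully_linear_mult: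
  fixes \<phi> :: "'a::field \<Rightarrow> 'a"
  assumes inj: "inj \<phi>" and "fully_linear \<phi>" and \<phi>1: "\<phi> 1 \<noteq> 0"
  shows "\<phi> 1 * \<phi> (a * x) = \<phi> a * \<phi> x"
proof -
  define C where "C = range (\<lambda>b. [b, b * x])"
  have "linear_code 2 C"
    unfolding linear_code_def
  proof (intro conjI ballI allI)
    show "replicate 2 0 \<in> C"
      unfolding C_def by (rule range_eqI[of _ _ 0]) (simp add: numeral_2_eq_2)
    fix u v assume "u \<in> C" "v \<in> C"
    then obtain b b' where "u = [b, b * x]" "v = [b', b' * x]"
      unfolding C_def by blast
    then show "map2 (+) u v \<in> C" and "map ((*) d) u \<in> C" for d
      unfolding C_def by (auto intro: range_eqI[of _ _ "b + b'"] range_eqI[of _ _ "d * b"]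
        simp: algebra_simps)
  qed (auto simp: C_def)
  txt \<open>Scaling \<open>(\<phi> 1, \<phi> x)\<close> by \<open>\<phi> a / \<phi> 1\<close> stays in the image code, and injectivity
    identifies the preimage as \<open>(a, a x)\<close>.\<close>
  then have "linear_code 2 (map \<phi> ` C)"
    using \<open>fully_linear \<phi>\<close> unfolding fully_linear_def by blast
  then have "\<forall>d u. \<exists>b. d * \<phi> u = \<phi> b \<and> d * \<phi> (u * x) = \<phi> (b * x)"
    unfolding linear_code_def C_def by (simp add: image_iff)
  then obtain b where "\<phi> a / \<phi> 1 * \<phi> 1 = \<phi> b" and b: "\<phi> a / \<phi> 1 * \<phi> (1 * x) = \<phi> (b * x)"
    by blast
  then have "\<phi> b = \<phi> a"
    using \<phi>1 by simp
  then have "b = a"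
    using inj by (simp add: inj_eq)
  then show ?thesis
    using b \<phi>1 by (simp add: field_simps)
qed

lemma fully_linear_aut_normalized_hom:
  fixes \<phi> :: "'a::field \<Rightarrow> 'a"
  assumes aut: "subfield_linear_aut Q \<phi>" and "fully_linear \<phi>"
  shows "\<phi> 1 \<noteq> 0" and "semiring_hom (\<lambda>x. \<phi> x / \<phi> 1)"
    and "\<And>c. c ^ Q = c \<Longrightarrow> \<phi> c / \<phi> 1 = c"
proof -
  have inj: "inj \<phi>" and add: "\<And>x y. \<phi> (x + y) = \<phi> x + \<phi> y"
    and linear: "\<And>c x. c ^ Q = c \<Longrightarrow> \<phi> (c * x) = c * \<phi> x"
    using aut unfolding subfield_linear_aut_def subfield_elems_def by (auto intro: bij_is_inj)
  have "\<phi> 0 = 0"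
    using add[of 0 0] by (metis add_cancel_right_right add_0)
  then show \<phi>1: "\<phi> 1 \<noteq> 0"
    using inj by (metis injD one_neq_zero)
  have "\<phi> (x * y) / \<phi> 1 = \<phi> x / \<phi> 1 * (\<phi> y / \<phi> 1)" for x y
    using fully_linear_mult[OF inj \<open>fully_linear \<phi>\<close> \<phi>1, of x y] \<phi>1
    by (simp add: field_simps)
  then show "semiring_hom (\<lambda>x. \<phi> x / \<phi> 1)"
    using \<phi>1 \<open>\<phi> 0 = 0\<close> by unfold_locales (simp_all add: add add_divide_distrib)
  show "\<phi> c / \<phi> 1 = c" if "c ^ Q = c" for c
    using linear[OF that, of 1] \<phi>1 by simp
qed

lemma smult_mult_smult:
  assumes "A \<in> carrier_mat nr n" and "B \<in> carrier_mat n nc"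
  shows "(a \<cdot>\<^sub>m A) * (b \<cdot>\<^sub>m B) = (a * b :: 'a::comm_semiring_0) \<cdot>\<^sub>m (A * B)"
  using assms by (intro eq_matI) (auto simp: ac_simps)

lemma one_smult_mat [simp]: "(1::'a::semiring_1) \<cdot>\<^sub>m A = A"
  by (intro eq_matI) simp_all

lemma invertible_matE:
  assumes "M \<in> carrier_mat n n" and "invertible_mat M"
  obtains M' where "M' \<in> carrier_mat n n" and "M * M' = 1\<^sub>m n" and "M' * M = 1\<^sub>m n"
proof -
  obtain M' where MM': "M * M' = 1\<^sub>m n" and M'M: "M' * M = 1\<^sub>m (dim_row M')"
    using assms unfolding invertible_mat_def inverts_mat_def by auto
  have "M' \<in> carrier_mat n n"
    using arg_cong[OF MM', of dim_col] arg_cong[OF M'M, of dim_col] assms(1) by auto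
  with MM' M'M show thesis
    using that by auto
qed

lemma map_mat_scaled_hom_inverse:
  fixes \<psi> :: "'a::field \<Rightarrow> 'b::field"
  assumes "semiring_hom \<psi>" and "c \<noteq> 0"
    and M: "M \<in> carrier_mat n n" and "invertible_mat M" and G: "G \<in> carrier_mat k n"
  obtains Minv where "inverts_mat (map_mat (\<lambda>x. c * \<psi> x) M) Minv"
    and "inverts_mat Minv (map_mat (\<lambda>x. c * \<psi> x) M)"
    and "map_mat (\<lambda>x. c * \<psi> x) (G * M) * Minv = map_mat \<psi> G"
proof -
  interpret semiring_hom \<psi> by (fact assms(1))
  obtain M' where M': "M' \<in> carrier_mat n n" and MM': "M * M' = 1\<^sub>m n" and M'M: "M' * M = 1\<^sub>m n"
    using invertible_matE[OF M \<open>invertible_mat M\<close>] .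
  have right: "map_mat \<psi> M * map_mat \<psi> M' = 1\<^sub>m n"
    using mat_hom_mult[OF M M'] MM' by (simp add: mat_hom_one)
  have left: "map_mat \<psi> M' * map_mat \<psi> M = 1\<^sub>m n"
    using mat_hom_mult[OF M' M] M'M by (simp add: mat_hom_one)
  have scaled: "map_mat (\<lambda>x. c * \<psi> x) A = c \<cdot>\<^sub>m map_mat \<psi> A" for A
    by (intro eq_matI) simp_all
  show thesis
  proof (rule that[of "inverse c \<cdot>\<^sub>m map_mat \<psi> M'"])
    show "inverts_mat (map_mat (\<lambda>x. c * \<psi> x) M) (inverse c \<cdot>\<^sub>m map_mat \<psi> M')"
      using right M M' \<open>c \<noteq> 0\<close> unfolding inverts_mat_def scaled
      by (simp add: smult_mult_smult[of _ n n])
    show "inverts_mat (inverse c \<cdot>\<^sub>m map_mat \<psi> M') (map_mat (\<lambda>x. c * \<psi> x) M)"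
      using left M M' \<open>c \<noteq> 0\<close> unfolding inverts_mat_def scaled
      by (simp add: smult_mult_smult[of _ n n])
    have "map_mat (\<lambda>x. c * \<psi> x) (G * M) * (inverse c \<cdot>\<^sub>m map_mat \<psi> M') =
        map_mat \<psi> G * map_mat \<psi> M * map_mat \<psi> M'"
      using G M M' \<open>c \<noteq> 0\<close> unfolding scaled
      by (simp add: smult_mult_smult[of _ k n] mat_hom_mult)
    also have "\<dots> = map_mat \<psi> G"
      using G M M' right by (simp add: assoc_mult_mat[of _ k n _ n _ n])
    finally show "map_mat (\<lambda>x. c * \<psi> x) (G * M) * (inverse c \<cdot>\<^sub>m map_mat \<psi> M') =
        map_mat \<psi> G" .
  qed
qed

theorem mainTheorem7:
  fixes q m n k :: nat and g :: "'a::{field,finite}" and M :: "'a mat"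
    and \<phi> :: "'a \<Rightarrow> 'a"
  assumes "prime_power q" and "card (UNIV :: 'a set) = q ^ n"
    and "m \<ge> 1" and "n = 2 * m" and "1 \<le> k" and "k \<le> n"
    and "normal_element q n g"
    and "M \<in> carrier_mat n n" and "invertible_mat M" and "is_circulant n M"
    and "subfield_linear_aut (q ^ m) \<phi>" and "fully_linear \<phi>"
  shows "invertible_mat (map_mat \<phi> M) \<and>
    (\<exists>j\<in>{0::nat, 1}. \<exists>Minv. inverts_mat (map_mat \<phi> M) Minv \<and> inverts_mat Minv (map_mat \<phi> M) \<and>
       map_mat \<phi> (circ_rows k n (\<lambda>t. g ^ (q ^ (n - 1 - t))) * M) * Minv =
       map_mat (\<lambda>x. x ^ (q ^ (m * j))) (circ_rows k n (\<lambda>t. g ^ (q ^ (n - 1 - t)))))"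
proof -
  define \<psi> where "\<psi> x = \<phi> x / \<phi> 1" for x
  note normalized = fully_linear_aut_normalized_hom[OF assms(11,12)]
  have \<psi>_cases: "\<psi> = id \<or> \<psi> = (\<lambda>x. x ^ q ^ m)"
    using hom_fixing_fixed_points_cases[OF frobenius_power_semiring_hom[OF assms(1,2)]
        power_power_half_card_eq_self[OF assms(2)[unfolded assms(4)]]]
      normalized(2,3) unfolding \<psi>_def by blast
  obtain j where j: "j \<in> {0::nat, 1}" and \<psi>_power: "\<psi> = (\<lambda>x. x ^ q ^ (m * j))"
  proof (cases "\<psi> = id")
    case True
    then show thesis by (intro that[of 0]) auto
  next
    case False
    then show thesis using \<psi>_cases by (intro that[of 1]) auto
  qed
  have "\<phi> = (\<lambda>x. \<phi> 1 * \<psi> x)"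
    using normalized(1) unfolding \<psi>_def by auto
  moreover have "circ_rows k n (\<lambda>t. g ^ q ^ (n - 1 - t)) \<in> carrier_mat k n"
    unfolding circ_rows_def by simp
  ultimately obtain Minv where "inverts_mat (map_mat \<phi> M) Minv" "inverts_mat Minv (map_mat \<phi> M)"
    "map_mat \<phi> (circ_rows k n (\<lambda>t. g ^ q ^ (n - 1 - t)) * M) * Minv =
      map_mat \<psi> (circ_rows k n (\<lambda>t. g ^ q ^ (n - 1 - t)))"
    using map_mat_scaled_hom_inverse[OF normalized(2)[folded \<psi>_def] normalized(1) assms(8,9)]
    by metis
  moreover have "invertible_mat (map_mat \<phi> M)"
    using calculation(1,2) assms(8) unfolding invertible_mat_def by auto
  ultimately show ?thesis
    using j unfolding \<psi>_power by blast
qed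

end
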